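(* Let $\mathscr V$ be a braided monoidal category with braiding $c$. The following are equivalent: (1) $\mathscr V$ is symmetric, i.e. $c_{X',X}\circ c_{X,X'}=1$ for all $X,X'$; (2) for every left $\mathscr V$-graded category $\mathscr C$ and every $\mathrm V$-graded square $(f,g,\varphi,\varphi')$ in $\mathscr C$, the quadruple $(\varphi,\varphi',f,g)$ is also a $\mathrm V$-graded square in $\mathscr C$.
   Context: $\mathscr V=(\mathscr V,\otimes,I,a,\ell,r)$ is a monoidal category with braiding $c_{X,Y}\colon X\otimes Y\to Y\otimes X$. A left $\mathscr V$-graded category $\mathscr C$ has a set of objects, sets $\mathscr C_X(A,B)$ of graded morphisms of grade $X\in\mathscr V$, reindexings $\alpha^*f\in\mathscr C_Y(A,B)$ along $\alpha\colon Y\to X$, composites $g\circ f\in\mathscr C_{Y\otimes X}(A,C)$ for $f\in\mathscr C_X(A,B)$, $g\in\mathscr C_Y(B,C)$, identities $\mathsf i_A\in\mathscr C_I(A,A)$, with functorial reindexing, $\beta^*g\circ\alpha^*f=(\beta\otimes\alpha)^*(g\circ f)$, $(h\circ g)\circ f=a^*(h\circ(g\circ f))$, $f\circ\mathsf i_A=r_X^*f$, $\mathsf i_B\circ f=\ell_X^*f$. (E.g. $\mathscr V$ itself with $\mathscr V_X(A,B)=\mathscr V(X\otimes A,B)$.) For braided $\mathscr V$, a $\mathrm V$-graded square in $\mathscr C$ is a quadruple $(f,g,\varphi,\varphi')$ with $f\in\mathscr C_X(A,A')$, $g\in\mathscr C_X(B,B')$, $\varphi\in\mathscr C_{X'}(A,B)$,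 $\varphi'\in\mathscr C_{X'}(A',B')$ (for some $X,X'$) such that $g\circ\varphi=c_{X,X'}^*(\varphi'\circ f)$ in $\mathscr C_{X\otimes X'}(A,B')$. *)

theory Defs
  imports Main
begin

record ('o,'m) mcat =
  Ob :: "'o set"
  Ar :: "'m set"
  dm :: "'m \<Rightarrow> 'o"
  cd :: "'m \<Rightarrow> 'o"
  cp :: "'m \<Rightarrow> 'm \<Rightarrow> 'm"        (* cp g f = g o f *)
  ident :: "'o \<Rightarrow> 'm"
  tO :: "'o \<Rightarrow> 'o \<Rightarrow> 'o"
  tM :: "'m \<Rightarrow> 'm \<Rightarrow> 'm"
  unitO :: "'o"
  asc :: "'o \<Rightarrow> 'o \<Rightarrow> 'o \<Rightarrow> 'm"
  lunit :: "'o \<Rightarrow> 'm"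
  runit :: "'o \<Rightarrow> 'm"
  brd :: "'o \<Rightarrow> 'o \<Rightarrow> 'm"

definition Hom :: "('o,'m,'z) mcat_scheme \<Rightarrow> 'o \<Rightarrow> 'o \<Rightarrow> 'm set" where
  "Hom V A B = {f \<in> Ar V. dm V f = A \<and> cd V f = B}"

definition is_iso :: "('o,'m,'z) mcat_scheme \<Rightarrow> 'm \<Rightarrow> bool" where
  "is_iso V f \<longleftrightarrow> f \<in> Ar V \<and> (\<exists>g \<in> Hom V (cd V f) (dm V f).
      cp V g f = ident V (dm V f) \<and> cp V f g = ident V (cd V f))"

definition minv :: "('o,'m,'z) mcat_scheme \<Rightarrow> 'm \<Rightarrow> 'm" where
  "minv V f = (THE g. g \<in> Hom V (cd V f) (dm V f) \<and>
      cp V g f = ident V (dm V f) \<and> cp V f g = ident V (cd V f))"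

definition is_category :: "('o,'m,'z) mcat_scheme \<Rightarrow> bool" where
  "is_category V \<longleftrightarrow>
    (\<forall>f \<in> Ar V. dm V f \<in> Ob V \<and> cd V f \<in> Ob V) \<and>
    (\<forall>A \<in> Ob V. ident V A \<in> Hom V A A) \<and>
    (\<forall>A B C f g. f \<in> Hom V A B \<longrightarrow> g \<in> Hom V B C \<longrightarrow> cp V g f \<in> Hom V A C) \<and>
    (\<forall>A B f. f \<in> Hom V A B \<longrightarrow> cp V f (ident V A) = f \<and> cp V (ident V B) f = f) \<and>
    (\<forall>A B C D f g h. f \<in> Hom V A B \<longrightarrow> g \<in> Hom V B C \<longrightarrow> h \<in> Hom V C D \<longrightarrow>
        cp V h (cp V g f) = cp V (cp V h g) f)"

definition is_monoidal :: "('o,'m,'z) mcat_scheme \<Rightarrow> bool" where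
  "is_monoidal V \<longleftrightarrow> is_category V \<and>
    \<comment> \<open>tensor is a bifunctor\<close>
    (\<forall>A \<in> Ob V. \<forall>B \<in> Ob V. tO V A B \<in> Ob V) \<and>
    (\<forall>A B C D f g. f \<in> Hom V A B \<longrightarrow> g \<in> Hom V C D \<longrightarrow>
        tM V f g \<in> Hom V (tO V A C) (tO V B D)) \<and>
    (\<forall>A \<in> Ob V. \<forall>B \<in> Ob V. tM V (ident V A) (ident V B) = ident V (tO V A B)) \<and>
    (\<forall>A B C A' B' C' f g f' g'. f \<in> Hom V A B \<longrightarrow> g \<in> Hom V B C \<longrightarrow>
        f' \<in> Hom V A' B' \<longrightarrow> g' \<in> Hom V B' C' \<longrightarrow>
        tM V (cp V g f) (cp V g' f') = cp V (tM V g g') (tM V f f')) \<and>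
    \<comment> \<open>unit object\<close>
    unitO V \<in> Ob V \<and>
    \<comment> \<open>associator: natural isomorphism\<close>
    (\<forall>X \<in> Ob V. \<forall>Y \<in> Ob V. \<forall>Z \<in> Ob V.
        asc V X Y Z \<in> Hom V (tO V (tO V X Y) Z) (tO V X (tO V Y Z)) \<and> is_iso V (asc V X Y Z)) \<and>
    (\<forall>X X' Y Y' Z Z' f g h. f \<in> Hom V X X' \<longrightarrow> g \<in> Hom V Y Y' \<longrightarrow> h \<in> Hom V Z Z' \<longrightarrow>
        cp V (asc V X' Y' Z') (tM V (tM V f g) h) = cp V (tM V f (tM V g h)) (asc V X Y Z)) \<and>
    \<comment> \<open>unitors: natural isomorphisms\<close>
    (\<forall>X \<in> Ob V. lunit V X \<in> Hom V (tO V (unitO V) X) X \<and> is_iso V (lunit V X)) \<and>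
    (\<forall>X \<in> Ob V. runit V X \<in> Hom V (tO V X (unitO V)) X \<and> is_iso V (runit V X)) \<and>
    (\<forall>X X' f. f \<in> Hom V X X' \<longrightarrow>
        cp V (lunit V X') (tM V (ident V (unitO V)) f) = cp V f (lunit V X)) \<and>
    (\<forall>X X' f. f \<in> Hom V X X' \<longrightarrow>
        cp V (runit V X') (tM V f (ident V (unitO V))) = cp V f (runit V X)) \<and>
    \<comment> \<open>pentagon\<close>
    (\<forall>W \<in> Ob V. \<forall>X \<in> Ob V. \<forall>Y \<in> Ob V. \<forall>Z \<in> Ob V.
        cp V (tM V (ident V W) (asc V X Y Z))
             (cp V (asc V W (tO V X Y) Z) (tM V (asc V W X Y) (ident V Z)))
        = cp V (asc V W X (tO V Y Z)) (asc V (tO V W X) Y Z)) \<and>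
    \<comment> \<open>triangle\<close>
    (\<forall>X \<in> Ob V. \<forall>Y \<in> Ob V.
        cp V (tM V (ident V X) (lunit V Y)) (asc V X (unitO V) Y)
        = tM V (runit V X) (ident V Y))"

definition is_braided :: "('o,'m,'z) mcat_scheme \<Rightarrow> bool" where
  "is_braided V \<longleftrightarrow> is_monoidal V \<and>
    (\<forall>X \<in> Ob V. \<forall>Y \<in> Ob V.
        brd V X Y \<in> Hom V (tO V X Y) (tO V Y X) \<and> is_iso V (brd V X Y)) \<and>
    (\<forall>X X' Y Y' f g. f \<in> Hom V X X' \<longrightarrow> g \<in> Hom V Y Y' \<longrightarrow>
        cp V (brd V X' Y') (tM V f g) = cp V (tM V g f) (brd V X Y)) \<and>
    \<comment> \<open>hexagon 1\<close>
    (\<forall>X \<in> Ob V. \<forall>Y \<in> Ob V. \<forall>Z \<in> Ob V.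
        cp V (asc V Y Z X) (cp V (brd V X (tO V Y Z)) (asc V X Y Z))
        = cp V (tM V (ident V Y) (brd V X Z))
            (cp V (asc V Y X Z) (tM V (brd V X Y) (ident V Z)))) \<and>
    \<comment> \<open>hexagon 2\<close>
    (\<forall>X \<in> Ob V. \<forall>Y \<in> Ob V. \<forall>Z \<in> Ob V.
        cp V (minv V (asc V Z X Y)) (cp V (brd V (tO V X Y) Z) (minv V (asc V X Y Z)))
        = cp V (tM V (brd V X Z) (ident V Y))
            (cp V (minv V (asc V X Z Y)) (tM V (ident V X) (brd V Y Z))))"

definition is_symmetric :: "('o,'m,'z) mcat_scheme \<Rightarrow> bool" where
  "is_symmetric V \<longleftrightarrow> (\<forall>X \<in> Ob V. \<forall>X' \<in> Ob V.
      cp V (brd V X' X) (brd V X X') = ident V (tO V X X'))"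

text \<open>Objects of type 'c, graded morphisms of type 'd. Operations carry the
relevant grades/objects explicitly, so graded hom-sets need not be disjoint.\<close>

record ('o,'m,'c,'d) gcat =
  gOb :: "'c set"
  gHom :: "'o \<Rightarrow> 'c \<Rightarrow> 'c \<Rightarrow> 'd set"
  reix :: "'c \<Rightarrow> 'c \<Rightarrow> 'm \<Rightarrow> 'd \<Rightarrow> 'd"
  gcp :: "'o \<Rightarrow> 'o \<Rightarrow> 'c \<Rightarrow> 'c \<Rightarrow> 'c \<Rightarrow> 'd \<Rightarrow> 'd \<Rightarrow> 'd"
     (* gcp Y X A B C g f = g o f  for f in C_X(A,B), g in C_Y(B,C) *)
  gid :: "'c \<Rightarrow> 'd"

definition is_graded_cat ::
  "('o,'m,'z) mcat_scheme \<Rightarrow> ('o,'m,'c,'d,'w) gcat_scheme \<Rightarrow> bool" where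
  "is_graded_cat V C \<longleftrightarrow>
    (\<forall>X \<in> Ob V. \<forall>Y \<in> Ob V. \<forall>A \<in> gOb C. \<forall>B \<in> gOb C. \<forall>\<alpha> f.
        \<alpha> \<in> Hom V Y X \<longrightarrow> f \<in> gHom C X A B \<longrightarrow> reix C A B \<alpha> f \<in> gHom C Y A B) \<and>
    (\<forall>X \<in> Ob V. \<forall>Y \<in> Ob V. \<forall>A \<in> gOb C. \<forall>B \<in> gOb C. \<forall>D \<in> gOb C. \<forall>f g.
        f \<in> gHom C X A B \<longrightarrow> g \<in> gHom C Y B D \<longrightarrow>
        gcp C Y X A B D g f \<in> gHom C (tO V Y X) A D) \<and>
    (\<forall>A \<in> gOb C. gid C A \<in> gHom C (unitO V) A A) \<and>
    \<comment> \<open>functoriality of reindexing\<close>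
    (\<forall>X \<in> Ob V. \<forall>A \<in> gOb C. \<forall>B \<in> gOb C. \<forall>f.
        f \<in> gHom C X A B \<longrightarrow> reix C A B (ident V X) f = f) \<and>
    (\<forall>X \<in> Ob V. \<forall>Y \<in> Ob V. \<forall>Z \<in> Ob V. \<forall>A \<in> gOb C. \<forall>B \<in> gOb C. \<forall>\<alpha> \<beta> f.
        \<alpha> \<in> Hom V Y X \<longrightarrow> \<beta> \<in> Hom V Z Y \<longrightarrow> f \<in> gHom C X A B \<longrightarrow>
        reix C A B (cp V \<alpha> \<beta>) f = reix C A B \<beta> (reix C A B \<alpha> f)) \<and>
    \<comment> \<open>beta^* g o alpha^* f = (beta (x) alpha)^* (g o f)\<close>
    (\<forall>X \<in> Ob V. \<forall>X' \<in> Ob V. \<forall>Y \<in> Ob V. \<forall>Y' \<in> Ob V.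
      \<forall>A \<in> gOb C. \<forall>B \<in> gOb C. \<forall>D \<in> gOb C. \<forall>\<alpha> \<beta> f g.
        \<alpha> \<in> Hom V X' X \<longrightarrow> \<beta> \<in> Hom V Y' Y \<longrightarrow> f \<in> gHom C X A B \<longrightarrow> g \<in> gHom C Y B D \<longrightarrow>
        gcp C Y' X' A B D (reix C B D \<beta> g) (reix C A B \<alpha> f)
        = reix C A D (tM V \<beta> \<alpha>) (gcp C Y X A B D g f)) \<and>
    \<comment> \<open>(h o g) o f = a^* (h o (g o f))\<close>
    (\<forall>X \<in> Ob V. \<forall>Y \<in> Ob V. \<forall>Z \<in> Ob V.
      \<forall>A \<in> gOb C. \<forall>B \<in> gOb C. \<forall>D \<in> gOb C. \<forall>E \<in> gOb C. \<forall>f g h.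
        f \<in> gHom C X A B \<longrightarrow> g \<in> gHom C Y B D \<longrightarrow> h \<in> gHom C Z D E \<longrightarrow>
        gcp C (tO V Z Y) X A B E (gcp C Z Y B D E h g) f
        = reix C A E (asc V Z Y X) (gcp C Z (tO V Y X) A D E h (gcp C Y X A B D g f))) \<and>
    \<comment> \<open>unit laws\<close>
    (\<forall>X \<in> Ob V. \<forall>A \<in> gOb C. \<forall>B \<in> gOb C. \<forall>f. f \<in> gHom C X A B \<longrightarrow>
        gcp C X (unitO V) A A B f (gid C A) = reix C A B (runit V X) f \<and>
        gcp C (unitO V) X A B B (gid C B) f = reix C A B (lunit V X) f)"

definition is_graded_square ::
  "('o,'m,'z) mcat_scheme \<Rightarrow> ('o,'m,'c,'d,'w) gcat_scheme \<Rightarrow>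
   'o \<Rightarrow> 'o \<Rightarrow> 'c \<Rightarrow> 'c \<Rightarrow> 'c \<Rightarrow> 'c \<Rightarrow> 'd \<Rightarrow> 'd \<Rightarrow> 'd \<Rightarrow> 'd \<Rightarrow> bool" where
  "is_graded_square V C X X' A A' B B' f g \<phi> \<phi>' \<longleftrightarrow>
     X \<in> Ob V \<and> X' \<in> Ob V \<and> A \<in> gOb C \<and> A' \<in> gOb C \<and> B \<in> gOb C \<and> B' \<in> gOb C \<and>
     f \<in> gHom C X A A' \<and> g \<in> gHom C X B B' \<and>
     \<phi> \<in> gHom C X' A B \<and> \<phi>' \<in> gHom C X' A' B' \<and>
     gcp C X X' A B B' g \<phi> = reix C A B' (brd V X X') (gcp C X' X A A' B' \<phi>' f)"

definition squares_transpose ::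
  "('o,'m,'z) mcat_scheme \<Rightarrow> ('o,'m,'c,'d) gcat \<Rightarrow> bool" where
  "squares_transpose V C \<longleftrightarrow>
    (\<forall>X X' A A' B B' f g \<phi> \<phi>'.
       is_graded_square V C X X' A A' B B' f g \<phi> \<phi>' \<longrightarrow>
       is_graded_square V C X' X A B A' B' \<phi> \<phi>' f g)"

end

(*
  Reindexing is functorial, so reindexing along c_{X',X} undoes reindexing along c_{X,X'}
  when the braiding is symmetric; then the equation g o phi = c_{X,X'}^* (phi' o f)
  of a square can be read backwards as phi' o f = c_{X',X}^* (g o phi), the equation of the
  transposed square.

  Conversely, test the transposition property on V graded over itself,
  V_X(A,B) = V(X (x) A, B).  There the square with f, phi, phi' identities and
  g = a_{X',X,I} o (c_{X,X'} (x) 1) o a_{X,X',I}^-1 commutes, and its transpose says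
  a_{X',X,I} = a_{X',X,I} o ((c_{X,X'} o c_{X',X}) (x) 1_I).  Cancelling the associator and
  then the right unitor gives c_{X,X'} o c_{X',X} = 1.  That V is graded over itself rests on
  the coherence axioms; its left unit law needs Kelly's lemma l_{X (x) Y} o a_{I,X,Y} = l_X (x) 1.
*)

theory Submission
  imports Defs
begin

section \<open>Monoidal categories\<close>

locale monoidal_category =
  fixes V :: "('o,'m,'z) mcat_scheme"
  assumes monoidal: "is_monoidal V"
begin

lemma category: "is_category V"
  using monoidal unfolding is_monoidal_def by (elim conjE) simp

lemma hom_obs: "f \<in> Hom V A B \<Longrightarrow> A \<in> Ob V \<and> B \<in> Ob V"
  using category unfolding is_category_def Hom_def by blast

lemma ident_hom [intro]: "A \<in> Ob V \<Longrightarrow> ident V A \<in> Hom V A A"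
  using category unfolding is_category_def by (elim conjE) simp

lemma comp_hom [intro]: "f \<in> Hom V A B \<Longrightarrow> g \<in> Hom V B C \<Longrightarrow> cp V g f \<in> Hom V A C"
  using category unfolding is_category_def by (elim conjE) simp

lemma comp_ident_right: "f \<in> Hom V A B \<Longrightarrow> cp V f (ident V A) = f"
  using category unfolding is_category_def by (elim conjE) simp

lemma comp_ident_left: "f \<in> Hom V A B \<Longrightarrow> cp V (ident V B) f = f"
  using category unfolding is_category_def by (elim conjE) simp

lemma comp_assoc:
  "f \<in> Hom V A B \<Longrightarrow> g \<in> Hom V B C \<Longrightarrow> h \<in> Hom V C D \<Longrightarrow>
   cp V h (cp V g f) = cp V (cp V h g) f"
  using category unfolding is_category_def by (elim conjE) simp

lemma tensor_ob [intro]: "A \<in> Ob V \<Longrightarrow> B \<in> Ob V \<Longrightarrow> tO V A B \<in> Ob V"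
  using monoidal unfolding is_monoidal_def by (elim conjE) simp

lemma tensor_hom [intro]:
  "f \<in> Hom V A B \<Longrightarrow> g \<in> Hom V C D \<Longrightarrow> tM V f g \<in> Hom V (tO V A C) (tO V B D)"
  using monoidal unfolding is_monoidal_def by (elim conjE) simp

lemma tensor_ident: "A \<in> Ob V \<Longrightarrow> B \<in> Ob V \<Longrightarrow> tM V (ident V A) (ident V B) = ident V (tO V A B)"
  using monoidal unfolding is_monoidal_def by (elim conjE) simp

lemma tensor_comp:
  "f \<in> Hom V A B \<Longrightarrow> g \<in> Hom V B C \<Longrightarrow> f' \<in> Hom V A' B' \<Longrightarrow> g' \<in> Hom V B' C' \<Longrightarrow>
   tM V (cp V g f) (cp V g' f') = cp V (tM V g g') (tM V f f')"
  using monoidal unfolding is_monoidal_def by (elim conjE) simp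

lemma unit_ob [intro]: "unitO V \<in> Ob V"
  using monoidal unfolding is_monoidal_def by (elim conjE) simp

lemma asc_hom [intro]:
  "X \<in> Ob V \<Longrightarrow> Y \<in> Ob V \<Longrightarrow> Z \<in> Ob V \<Longrightarrow>
   asc V X Y Z \<in> Hom V (tO V (tO V X Y) Z) (tO V X (tO V Y Z))"
  using monoidal unfolding is_monoidal_def by (elim conjE) simp

lemma asc_iso: "X \<in> Ob V \<Longrightarrow> Y \<in> Ob V \<Longrightarrow> Z \<in> Ob V \<Longrightarrow> is_iso V (asc V X Y Z)"
  using monoidal unfolding is_monoidal_def by (elim conjE) simp

lemma asc_natural:
  "f \<in> Hom V X X' \<Longrightarrow> g \<in> Hom V Y Y' \<Longrightarrow> h \<in> Hom V Z Z' \<Longrightarrow>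
   cp V (asc V X' Y' Z') (tM V (tM V f g) h) = cp V (tM V f (tM V g h)) (asc V X Y Z)"
  using monoidal unfolding is_monoidal_def by (elim conjE) simp

lemma lunit_hom [intro]: "X \<in> Ob V \<Longrightarrow> lunit V X \<in> Hom V (tO V (unitO V) X) X"
  using monoidal unfolding is_monoidal_def by (elim conjE) simp

lemma lunit_iso: "X \<in> Ob V \<Longrightarrow> is_iso V (lunit V X)"
  using monoidal unfolding is_monoidal_def by (elim conjE) simp

lemma runit_hom [intro]: "X \<in> Ob V \<Longrightarrow> runit V X \<in> Hom V (tO V X (unitO V)) X"
  using monoidal unfolding is_monoidal_def by (elim conjE) simp

lemma runit_iso: "X \<in> Ob V \<Longrightarrow> is_iso V (runit V X)"
  using monoidal unfolding is_monoidal_def by (elim conjE) simp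

lemma lunit_natural:
  "f \<in> Hom V X X' \<Longrightarrow> cp V (lunit V X') (tM V (ident V (unitO V)) f) = cp V f (lunit V X)"
  using monoidal unfolding is_monoidal_def by (elim conjE) simp

lemma runit_natural:
  "f \<in> Hom V X X' \<Longrightarrow> cp V (runit V X') (tM V f (ident V (unitO V))) = cp V f (runit V X)"
  using monoidal unfolding is_monoidal_def by (elim conjE) simp

lemma pentagon:
  "W \<in> Ob V \<Longrightarrow> X \<in> Ob V \<Longrightarrow> Y \<in> Ob V \<Longrightarrow> Z \<in> Ob V \<Longrightarrow>
   cp V (tM V (ident V W) (asc V X Y Z))
        (cp V (asc V W (tO V X Y) Z) (tM V (asc V W X Y) (ident V Z)))
   = cp V (asc V W X (tO V Y Z)) (asc V (tO V W X) Y Z)"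
  using monoidal unfolding is_monoidal_def by (elim conjE) simp

lemma triangle:
  "X \<in> Ob V \<Longrightarrow> Y \<in> Ob V \<Longrightarrow>
   cp V (tM V (ident V X) (lunit V Y)) (asc V X (unitO V) Y) = tM V (runit V X) (ident V Y)"
  using monoidal unfolding is_monoidal_def by (elim conjE) simp

lemma tensor_ident_comp:
  assumes f: "f \<in> Hom V A B" and g: "g \<in> Hom V B C" and Z: "Z \<in> Ob V"
  shows "tM V (ident V Z) (cp V g f) = cp V (tM V (ident V Z) g) (tM V (ident V Z) f)"
  using tensor_comp[OF ident_hom[OF Z] ident_hom[OF Z] f g] comp_ident_right[OF ident_hom[OF Z]]
  by simp

lemma tensor_comp_ident:
  assumes f: "f \<in> Hom V A B" and g: "g \<in> Hom V B C" and Z: "Z \<in> Ob V"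
  shows "tM V (cp V g f) (ident V Z) = cp V (tM V g (ident V Z)) (tM V f (ident V Z))"
  using tensor_comp[OF f g ident_hom[OF Z] ident_hom[OF Z]] comp_ident_right[OF ident_hom[OF Z]]
  by simp

lemma iso_cancel_right:
  assumes iso: "is_iso V f" and f: "f \<in> Hom V A B"
    and x: "x \<in> Hom V B C" and y: "y \<in> Hom V B C" and eq: "cp V x f = cp V y f"
  shows "x = y"
proof -
  obtain g where g: "g \<in> Hom V B A" "cp V f g = ident V B"
    using iso f unfolding is_iso_def Hom_def by auto
  have "x = cp V (cp V x f) g"
    using comp_assoc[OF g(1) f x] g(2) comp_ident_right[OF x] by simp
  also have "\<dots> = y"
    using eq comp_assoc[OF g(1) f y] g(2) comp_ident_right[OF y] by simp
  finally show ?thesis .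
qed

lemma iso_cancel_left:
  assumes iso: "is_iso V f" and f: "f \<in> Hom V B C"
    and x: "x \<in> Hom V A B" and y: "y \<in> Hom V A B" and eq: "cp V f x = cp V f y"
  shows "x = y"
proof -
  obtain g where g: "g \<in> Hom V C B" "cp V g f = ident V B"
    using iso f unfolding is_iso_def Hom_def by auto
  have "x = cp V g (cp V f x)"
    using comp_assoc[OF x f g(1)] g(2) comp_ident_left[OF x] by simp
  also have "\<dots> = y"
    using eq comp_assoc[OF y f g(1)] g(2) comp_ident_left[OF y] by simp
  finally show ?thesis .
qed

lemma factor_through_iso:
  assumes iso: "is_iso V f" and f: "f \<in> Hom V A B" and k: "k \<in> Hom V A C"
  obtains g where "g \<in> Hom V B C" and "cp V g f = k"
proof -
  obtain f' where f': "f' \<in> Hom V B A" "cp V f' f = ident V A"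
    using iso f unfolding is_iso_def Hom_def by auto
  have "cp V (cp V k f') f = k"
    using comp_assoc[OF f f'(1) k] f'(2) comp_ident_right[OF k] by simp
  then show ?thesis using that f'(1) k by blast
qed

lemma iso_tensor_ident:
  assumes iso: "is_iso V f" and f: "f \<in> Hom V A B" and C: "C \<in> Ob V"
  shows "is_iso V (tM V f (ident V C))"
proof -
  obtain g where g: "g \<in> Hom V B A" "cp V g f = ident V A" "cp V f g = ident V B"
    using iso f unfolding is_iso_def Hom_def by auto
  have "cp V (tM V g (ident V C)) (tM V f (ident V C)) = ident V (tO V A C)"
    using tensor_comp_ident[OF f g(1) C] g(2) tensor_ident hom_obs[OF f] C by simp
  moreover have "cp V (tM V f (ident V C)) (tM V g (ident V C)) = ident V (tO V B C)"
    using tensor_comp_ident[OF g(1) f C] g(3) tensor_ident hom_obs[OF f] C by simp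
  moreover have "tM V g (ident V C) \<in> Hom V (tO V B C) (tO V A C)"
    using g(1) C by blast
  moreover have "tM V f (ident V C) \<in> Hom V (tO V A C) (tO V B C)"
    using f C by blast
  ultimately show ?thesis unfolding is_iso_def Hom_def by auto
qed

lemma unit_tensor_cancel:
  assumes f: "f \<in> Hom V A B" and g: "g \<in> Hom V A B"
    and eq: "tM V (ident V (unitO V)) f = tM V (ident V (unitO V)) g"
  shows "f = g"
proof -
  have A: "A \<in> Ob V" using hom_obs[OF f] by blast
  have "cp V f (lunit V A) = cp V g (lunit V A)"
    using lunit_natural[OF f] lunit_natural[OF g] eq by simp
  then show ?thesis using iso_cancel_right[OF lunit_iso[OF A] lunit_hom[OF A] f g] by blast
qed

lemma ident_if_tensor_unit_ident:
  assumes u: "u \<in> Hom V W W" and uI: "tM V u (ident V (unitO V)) = ident V (tO V W (unitO V))"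
  shows "u = ident V W"
proof -
  have W: "W \<in> Ob V" using hom_obs[OF u] by blast
  have "cp V u (runit V W) = cp V (ident V W) (runit V W)"
    using runit_natural[OF u] uI comp_ident_right[OF runit_hom[OF W]]
      comp_ident_left[OF runit_hom[OF W]] by simp
  then show ?thesis by (rule iso_cancel_right[OF runit_iso[OF W] runit_hom[OF W] u ident_hom[OF W]])
qed

text \<open>Towards Kelly's lemma \<open>lunit_tensor_asc\<close>: after tensoring with the identity of the
unit on the left and precomposing with the isomorphism \<open>a(I, I \<otimes> X, Y) \<circ> (a(I, I, X) \<otimes> 1)\<close>,
both of its sides reduce to the same morphism, one via the pentagon and the other via naturality,
each finishing with the triangle axiom.\<close>

lemma whisker_lunit_asc_eq:
  assumes X: "X \<in> Ob V" and Y: "Y \<in> Ob V"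
  defines "I \<equiv> unitO V"
  shows "cp V (tM V (ident V I) (cp V (lunit V (tO V X Y)) (asc V I X Y)))
             (cp V (asc V I (tO V I X) Y) (tM V (asc V I I X) (ident V Y)))
         = cp V (asc V I X Y) (tM V (tM V (runit V I) (ident V X)) (ident V Y))"
proof -
  have I: "I \<in> Ob V" unfolding I_def by blast
  have XY: "tO V X Y \<in> Ob V" using X Y by blast
  have a: "asc V I X Y \<in> Hom V (tO V (tO V I X) Y) (tO V I (tO V X Y))" using I X Y by blast
  have l: "lunit V (tO V X Y) \<in> Hom V (tO V I (tO V X Y)) (tO V X Y)"
    unfolding I_def using XY by blast
  have Ia: "tM V (ident V I) (asc V I X Y) \<in> Hom V (tO V I (tO V (tO V I X) Y)) (tO V I (tO V I (tO V X Y)))"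
    using I a by blast
  have Il: "tM V (ident V I) (lunit V (tO V X Y)) \<in> Hom V (tO V I (tO V I (tO V X Y))) (tO V I (tO V X Y))"
    using I l by blast
  have pentagon_side: "cp V (asc V I (tO V I X) Y) (tM V (asc V I I X) (ident V Y))
      \<in> Hom V (tO V (tO V (tO V I I) X) Y) (tO V I (tO V (tO V I X) Y))"
    using I X Y by blast
  have a4: "asc V (tO V I I) X Y \<in> Hom V (tO V (tO V (tO V I I) X) Y) (tO V (tO V I I) (tO V X Y))"
    using I X Y by blast
  have a5: "asc V I I (tO V X Y) \<in> Hom V (tO V (tO V I I) (tO V X Y)) (tO V I (tO V I (tO V X Y)))"
    using I XY by blast
  have "cp V (tM V (ident V I) (cp V (lunit V (tO V X Y)) (asc V I X Y)))
          (cp V (asc V I (tO V I X) Y) (tM V (asc V I I X) (ident V Y)))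
      = cp V (tM V (ident V I) (lunit V (tO V X Y)))
          (cp V (tM V (ident V I) (asc V I X Y))
            (cp V (asc V I (tO V I X) Y) (tM V (asc V I I X) (ident V Y))))"
    using tensor_ident_comp[OF a l I] comp_assoc[OF pentagon_side Ia Il] by simp
  also have "\<dots> = cp V (tM V (ident V I) (lunit V (tO V X Y)))
      (cp V (asc V I I (tO V X Y)) (asc V (tO V I I) X Y))"
    using pentagon[OF I I X Y] by simp
  also have "\<dots> = cp V (tM V (runit V I) (ident V (tO V X Y))) (asc V (tO V I I) X Y)"
    using comp_assoc[OF a4 a5 Il] triangle[OF I XY] unfolding I_def by simp
  also have "\<dots> = cp V (asc V I X Y) (tM V (tM V (runit V I) (ident V X)) (ident V Y))"
    using asc_natural[OF runit_hom[OF I] ident_hom[OF X] ident_hom[OF Y]] tensor_ident[OF X Y]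
    unfolding I_def by simp
  finally show ?thesis .
qed

lemma whisker_lunit_tensor_eq:
  assumes X: "X \<in> Ob V" and Y: "Y \<in> Ob V"
  defines "I \<equiv> unitO V"
  shows "cp V (tM V (ident V I) (tM V (lunit V X) (ident V Y)))
             (cp V (asc V I (tO V I X) Y) (tM V (asc V I I X) (ident V Y)))
         = cp V (asc V I X Y) (tM V (tM V (runit V I) (ident V X)) (ident V Y))"
proof -
  have I: "I \<in> Ob V" unfolding I_def by blast
  have lX: "lunit V X \<in> Hom V (tO V I X) X" unfolding I_def using X by blast
  have a1: "asc V I (tO V I X) Y \<in> Hom V (tO V (tO V I (tO V I X)) Y) (tO V I (tO V (tO V I X) Y))"
    using I X Y by blast
  have a2: "asc V I I X \<in> Hom V (tO V (tO V I I) X) (tO V I (tO V I X))" using I X by blast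
  have Il: "tM V (ident V I) (lunit V X) \<in> Hom V (tO V I (tO V I X)) (tO V I X)"
    using I lX by blast
  have a2Y: "tM V (asc V I I X) (ident V Y) \<in> Hom V (tO V (tO V (tO V I I) X) Y) (tO V (tO V I (tO V I X)) Y)"
    using a2 Y by blast
  have IlY: "tM V (ident V I) (tM V (lunit V X) (ident V Y))
      \<in> Hom V (tO V I (tO V (tO V I X) Y)) (tO V I (tO V X Y))"
    using I lX Y by blast
  have "cp V (tM V (ident V I) (tM V (lunit V X) (ident V Y)))
          (cp V (asc V I (tO V I X) Y) (tM V (asc V I I X) (ident V Y)))
      = cp V (cp V (asc V I X Y) (tM V (tM V (ident V I) (lunit V X)) (ident V Y)))
          (tM V (asc V I I X) (ident V Y))"
    using comp_assoc[OF a2Y a1 IlY] asc_natural[OF ident_hom[OF I] lX ident_hom[OF Y]] by simp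
  also have "\<dots> = cp V (asc V I X Y) (tM V (cp V (tM V (ident V I) (lunit V X)) (asc V I I X)) (ident V Y))"
    using comp_assoc[OF a2Y tensor_hom[OF Il ident_hom[OF Y]] asc_hom[OF I X Y]]
      tensor_comp_ident[OF a2 Il Y] by simp
  also have "\<dots> = cp V (asc V I X Y) (tM V (tM V (runit V I) (ident V X)) (ident V Y))"
    using triangle[OF I X] unfolding I_def by simp
  finally show ?thesis .
qed

lemma lunit_tensor_asc:
  assumes X: "X \<in> Ob V" and Y: "Y \<in> Ob V"
  shows "cp V (lunit V (tO V X Y)) (asc V (unitO V) X Y) = tM V (lunit V X) (ident V Y)"
proof -
  let ?I = "unitO V"
  let ?L = "cp V (lunit V (tO V X Y)) (asc V ?I X Y)"
  let ?R = "tM V (lunit V X) (ident V Y)"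
  let ?a = "asc V ?I (tO V ?I X) Y"
  let ?P = "tM V (asc V ?I ?I X) (ident V Y)"
  have I: "?I \<in> Ob V" by blast
  have L: "?L \<in> Hom V (tO V (tO V ?I X) Y) (tO V X Y)" using X Y by blast
  have R: "?R \<in> Hom V (tO V (tO V ?I X) Y) (tO V X Y)" using X Y by blast
  have a: "?a \<in> Hom V (tO V (tO V ?I (tO V ?I X)) Y) (tO V ?I (tO V (tO V ?I X) Y))"
    using X Y by blast
  have P: "?P \<in> Hom V (tO V (tO V (tO V ?I ?I) X) Y) (tO V (tO V ?I (tO V ?I X)) Y)"
    using X Y by blast
  have "cp V (cp V (tM V (ident V ?I) ?L) ?a) ?P = cp V (cp V (tM V (ident V ?I) ?R) ?a) ?P"
    using whisker_lunit_asc_eq[OF X Y] whisker_lunit_tensor_eq[OF X Y]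
      comp_assoc[OF P a tensor_hom[OF ident_hom[OF I] L]]
      comp_assoc[OF P a tensor_hom[OF ident_hom[OF I] R]] by simp
  then have "cp V (tM V (ident V ?I) ?L) ?a = cp V (tM V (ident V ?I) ?R) ?a"
    using iso_cancel_right[OF iso_tensor_ident[OF asc_iso[OF I I X] asc_hom[OF I I X] Y] P]
      a L R by blast
  then have "tM V (ident V ?I) ?L = tM V (ident V ?I) ?R"
    using iso_cancel_right[OF asc_iso[OF I _ Y] a] X L R by blast
  then show ?thesis using unit_tensor_cancel[OF L R] by blast
qed

end

section \<open>A monoidal category graded over itself\<close>

definition self_graded :: "('o,'m,'z) mcat_scheme \<Rightarrow> ('o,'m,'o,'m) gcat" where
  "self_graded V =
    \<lparr>gOb = Ob V,
     gHom = (\<lambda>X A B. Hom V (tO V X A) B),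
     reix = (\<lambda>A B \<alpha> f. cp V f (tM V \<alpha> (ident V A))),
     gcp = (\<lambda>Y X A B D g f. cp V g (cp V (tM V (ident V Y) f) (asc V Y X A))),
     gid = lunit V\<rparr>"

lemma self_graded_simps:
  "gOb (self_graded V) = Ob V"
  "gHom (self_graded V) X A B = Hom V (tO V X A) B"
  "reix (self_graded V) A B \<alpha> f = cp V f (tM V \<alpha> (ident V A))"
  "gcp (self_graded V) Y X A B D g f = cp V g (cp V (tM V (ident V Y) f) (asc V Y X A))"
  "gid (self_graded V) A = lunit V A"
  by (simp_all add: self_graded_def)

context monoidal_category
begin

lemma self_graded_reix_comp:
  assumes A: "A \<in> Ob V" and \<alpha>: "\<alpha> \<in> Hom V Y X" and \<beta>: "\<beta> \<in> Hom V Z Y"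
    and f: "f \<in> Hom V (tO V X A) B"
  shows "cp V f (tM V (cp V \<alpha> \<beta>) (ident V A))
         = cp V (cp V f (tM V \<alpha> (ident V A))) (tM V \<beta> (ident V A))"
  using tensor_comp_ident[OF \<beta> \<alpha> A]
    comp_assoc[OF tensor_hom[OF \<beta> ident_hom[OF A]] tensor_hom[OF \<alpha> ident_hom[OF A]] f]
  by simp

lemma self_graded_reix_gcp:
  assumes A: "A \<in> Ob V" and B: "B \<in> Ob V"
    and \<alpha>: "\<alpha> \<in> Hom V X' X" and \<beta>: "\<beta> \<in> Hom V Y' Y"
    and f: "f \<in> Hom V (tO V X A) B" and g: "g \<in> Hom V (tO V Y B) D"
  shows "cp V (cp V g (tM V \<beta> (ident V B)))
             (cp V (tM V (ident V Y') (cp V f (tM V \<alpha> (ident V A)))) (asc V Y' X' A))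
         = cp V (cp V g (cp V (tM V (ident V Y) f) (asc V Y X A))) (tM V (tM V \<beta> \<alpha>) (ident V A))"
proof -
  have X: "X \<in> Ob V" "X' \<in> Ob V" and Y: "Y \<in> Ob V" "Y' \<in> Ob V"
    using hom_obs \<alpha> \<beta> by auto
  let ?f' = "cp V f (tM V \<alpha> (ident V A))"
  have \<alpha>A: "tM V \<alpha> (ident V A) \<in> Hom V (tO V X' A) (tO V X A)" using \<alpha> A by blast
  have f': "?f' \<in> Hom V (tO V X' A) B" using \<alpha>A f by blast
  have a': "asc V Y' X' A \<in> Hom V (tO V (tO V Y' X') A) (tO V Y' (tO V X' A))" using X Y A by blast
  have a: "asc V Y X A \<in> Hom V (tO V (tO V Y X) A) (tO V Y (tO V X A))" using X Y A by blast
  have Yf: "tM V (ident V Y) f \<in> Hom V (tO V Y (tO V X A)) (tO V Y B)" using Y f by blast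
  have Y'f': "tM V (ident V Y') ?f' \<in> Hom V (tO V Y' (tO V X' A)) (tO V Y' B)" using Y f' by blast
  have \<beta>\<alpha>A: "tM V (tM V \<beta> \<alpha>) (ident V A) \<in> Hom V (tO V (tO V Y' X') A) (tO V (tO V Y X) A)"
    using \<alpha> \<beta> A by blast
  have \<beta>\<alpha>A': "tM V \<beta> (tM V \<alpha> (ident V A)) \<in> Hom V (tO V Y' (tO V X' A)) (tO V Y (tO V X A))"
    using \<beta> \<alpha>A by blast
  have \<beta>B: "tM V \<beta> (ident V B) \<in> Hom V (tO V Y' B) (tO V Y B)" using \<beta> B by blast
  have "cp V (cp V g (cp V (tM V (ident V Y) f) (asc V Y X A))) (tM V (tM V \<beta> \<alpha>) (ident V A))
      = cp V g (cp V (tM V (ident V Y) f) (cp V (tM V \<beta> (tM V \<alpha> (ident V A))) (asc V Y' X' A)))"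
    using comp_assoc[OF \<beta>\<alpha>A comp_hom[OF a Yf] g] comp_assoc[OF \<beta>\<alpha>A a Yf]
      asc_natural[OF \<beta> \<alpha> ident_hom[OF A]] by simp
  also have "\<dots> = cp V g (cp V (tM V \<beta> ?f') (asc V Y' X' A))"
    using comp_assoc[OF a' \<beta>\<alpha>A' Yf] tensor_comp[OF \<beta> ident_hom[OF Y(1)] \<alpha>A f]
      comp_ident_left[OF \<beta>] by simp
  also have "\<dots> = cp V (cp V g (tM V \<beta> (ident V B))) (cp V (tM V (ident V Y') ?f') (asc V Y' X' A))"
    using comp_assoc[OF comp_hom[OF a' Y'f'] \<beta>B g] comp_assoc[OF a' Y'f' \<beta>B]
      tensor_comp[OF ident_hom[OF Y(2)] \<beta> f' ident_hom[OF B]]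
      comp_ident_right[OF \<beta>] comp_ident_left[OF f'] by simp
  finally show ?thesis by simp
qed

lemma self_graded_gcp_assoc_lhs:
  assumes X: "X \<in> Ob V" and Y: "Y \<in> Ob V" and Z: "Z \<in> Ob V" and A: "A \<in> Ob V" and B: "B \<in> Ob V"
    and f: "f \<in> Hom V (tO V X A) B" and g: "g \<in> Hom V (tO V Y B) D" and h: "h \<in> Hom V (tO V Z D) E"
  shows "cp V (cp V h (cp V (tM V (ident V Z) g) (asc V Z Y B)))
             (cp V (tM V (ident V (tO V Z Y)) f) (asc V (tO V Z Y) X A))
         = cp V h (cp V (tM V (ident V Z) g) (cp V (tM V (ident V Z) (tM V (ident V Y) f))
             (cp V (asc V Z Y (tO V X A)) (asc V (tO V Z Y) X A))))"
proof -
  have Zg: "tM V (ident V Z) g \<in> Hom V (tO V Z (tO V Y B)) (tO V Z D)" using Z g by blast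
  have ZYf: "tM V (ident V Z) (tM V (ident V Y) f) \<in> Hom V (tO V Z (tO V Y (tO V X A))) (tO V Z (tO V Y B))"
    using Z Y f by blast
  have ZYf': "tM V (tM V (ident V Z) (ident V Y)) f \<in> Hom V (tO V (tO V Z Y) (tO V X A)) (tO V (tO V Z Y) B)"
    using Z Y f by blast
  have a1: "asc V Z Y B \<in> Hom V (tO V (tO V Z Y) B) (tO V Z (tO V Y B))" using Z Y B by blast
  have a2: "asc V (tO V Z Y) X A \<in> Hom V (tO V (tO V (tO V Z Y) X) A) (tO V (tO V Z Y) (tO V X A))"
    using X Y Z A by blast
  have a3: "asc V Z Y (tO V X A) \<in> Hom V (tO V (tO V Z Y) (tO V X A)) (tO V Z (tO V Y (tO V X A)))"
    using X Y Z A by blast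
  have "cp V (cp V h (cp V (tM V (ident V Z) g) (asc V Z Y B)))
          (cp V (tM V (ident V (tO V Z Y)) f) (asc V (tO V Z Y) X A))
      = cp V h (cp V (tM V (ident V Z) g) (cp V (cp V (asc V Z Y B) (tM V (tM V (ident V Z) (ident V Y)) f))
          (asc V (tO V Z Y) X A)))"
    using comp_assoc[OF comp_hom[OF a2 ZYf'] comp_hom[OF a1 Zg] h]
      comp_assoc[OF comp_hom[OF a2 ZYf'] a1 Zg] comp_assoc[OF a2 ZYf' a1] tensor_ident[OF Z Y]
    by simp
  also have "\<dots> = cp V h (cp V (tM V (ident V Z) g) (cp V (tM V (ident V Z) (tM V (ident V Y) f))
             (cp V (asc V Z Y (tO V X A)) (asc V (tO V Z Y) X A))))"
    using asc_natural[OF ident_hom[OF Z] ident_hom[OF Y] f] comp_assoc[OF a2 a3 ZYf] by simp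
  finally show ?thesis .
qed

lemma self_graded_gcp_assoc_rhs:
  assumes X: "X \<in> Ob V" and Y: "Y \<in> Ob V" and Z: "Z \<in> Ob V" and A: "A \<in> Ob V"
    and f: "f \<in> Hom V (tO V X A) B" and g: "g \<in> Hom V (tO V Y B) D" and h: "h \<in> Hom V (tO V Z D) E"
  shows "cp V (cp V h (cp V (tM V (ident V Z) (cp V g (cp V (tM V (ident V Y) f) (asc V Y X A))))
                          (asc V Z (tO V Y X) A)))
             (tM V (asc V Z Y X) (ident V A))
         = cp V h (cp V (tM V (ident V Z) g) (cp V (tM V (ident V Z) (tM V (ident V Y) f))
             (cp V (asc V Z Y (tO V X A)) (asc V (tO V Z Y) X A))))"
proof -
  have Zg: "tM V (ident V Z) g \<in> Hom V (tO V Z (tO V Y B)) (tO V Z D)" using Z g by blast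
  have Yf: "tM V (ident V Y) f \<in> Hom V (tO V Y (tO V X A)) (tO V Y B)" using Y f by blast
  have ZYf: "tM V (ident V Z) (tM V (ident V Y) f) \<in> Hom V (tO V Z (tO V Y (tO V X A))) (tO V Z (tO V Y B))"
    using Z Yf by blast
  have a4: "asc V Y X A \<in> Hom V (tO V (tO V Y X) A) (tO V Y (tO V X A))" using X Y A by blast
  have a5: "asc V Z (tO V Y X) A \<in> Hom V (tO V (tO V Z (tO V Y X)) A) (tO V Z (tO V (tO V Y X) A))"
    using X Y Z A by blast
  have a6: "tM V (asc V Z Y X) (ident V A) \<in> Hom V (tO V (tO V (tO V Z Y) X) A) (tO V (tO V Z (tO V Y X)) A)"
    using X Y Z A by blast
  have Za4: "tM V (ident V Z) (asc V Y X A) \<in> Hom V (tO V Z (tO V (tO V Y X) A)) (tO V Z (tO V Y (tO V X A)))"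
    using Z a4 by blast
  have a56: "cp V (asc V Z (tO V Y X) A) (tM V (asc V Z Y X) (ident V A))
      \<in> Hom V (tO V (tO V (tO V Z Y) X) A) (tO V Z (tO V (tO V Y X) A))" using a5 a6 by blast
  have ZG: "tM V (ident V Z) (cp V g (cp V (tM V (ident V Y) f) (asc V Y X A)))
      \<in> Hom V (tO V Z (tO V (tO V Y X) A)) (tO V Z D)"
    using Z a4 Yf g by blast
  have "cp V (cp V h (cp V (tM V (ident V Z) (cp V g (cp V (tM V (ident V Y) f) (asc V Y X A))))
          (asc V Z (tO V Y X) A))) (tM V (asc V Z Y X) (ident V A))
      = cp V h (cp V (tM V (ident V Z) g) (cp V (tM V (ident V Z) (tM V (ident V Y) f))
          (cp V (tM V (ident V Z) (asc V Y X A)) (cp V (asc V Z (tO V Y X) A) (tM V (asc V Z Y X) (ident V A))))))"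
    using tensor_ident_comp[OF comp_hom[OF a4 Yf] g Z] tensor_ident_comp[OF a4 Yf Z]
      comp_assoc[OF a6 comp_hom[OF a5 ZG] h] comp_assoc[OF a6 a5 ZG]
      comp_assoc[OF a56 comp_hom[OF Za4 ZYf] Zg] comp_assoc[OF a56 Za4 ZYf]
    by simp
  then show ?thesis
    using pentagon[OF Z Y X A] by simp
qed

lemma self_graded_gid_left:
  assumes X: "X \<in> Ob V" and A: "A \<in> Ob V" and f: "f \<in> Hom V (tO V X A) B"
  shows "cp V (lunit V B) (cp V (tM V (ident V (unitO V)) f) (asc V (unitO V) X A))
         = cp V f (tM V (lunit V X) (ident V A))"
proof -
  have B: "B \<in> Ob V" using hom_obs[OF f] by blast
  have a: "asc V (unitO V) X A \<in> Hom V (tO V (tO V (unitO V) X) A) (tO V (unitO V) (tO V X A))"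
    using X A by blast
  have If: "tM V (ident V (unitO V)) f \<in> Hom V (tO V (unitO V) (tO V X A)) (tO V (unitO V) B)"
    using f by blast
  have l: "lunit V (tO V X A) \<in> Hom V (tO V (unitO V) (tO V X A)) (tO V X A)" using X A by blast
  show ?thesis
    using comp_assoc[OF a If lunit_hom[OF B]] lunit_natural[OF f] comp_assoc[OF a l f]
      lunit_tensor_asc[OF X A] by simp
qed

lemma self_graded_gcp_ident_right:
  assumes Y: "Y \<in> Ob V" and X: "X \<in> Ob V" and A: "A \<in> Ob V" and g: "g \<in> Hom V (tO V Y (tO V X A)) D"
  shows "gcp (self_graded V) Y X A (tO V X A) D g (ident V (tO V X A)) = cp V g (asc V Y X A)"
  using tensor_ident[OF Y tensor_ob[OF X A]] comp_ident_left[OF asc_hom[OF Y X A]]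
    comp_ident_right[OF g] g
  by (simp add: self_graded_simps)

lemma self_graded_square_ident_sides_iff:
  assumes X: "X \<in> Ob V" and X': "X' \<in> Ob V" and A: "A \<in> Ob V"
    and g: "g \<in> Hom V (tO V X (tO V X' A)) B'" and \<phi>': "\<phi>' \<in> Hom V (tO V X' (tO V X A)) B'"
  shows "is_graded_square V (self_graded V) X X' A (tO V X A) (tO V X' A) B'
           (ident V (tO V X A)) g (ident V (tO V X' A)) \<phi>'
         \<longleftrightarrow> cp V g (asc V X X' A) = cp V (cp V \<phi>' (asc V X' X A)) (tM V (brd V X X') (ident V A))"
proof -
  have B': "B' \<in> Ob V" using hom_obs[OF g] by blast
  show ?thesis
    unfolding is_graded_square_def
    using self_graded_gcp_ident_right[OF X X' A g] self_graded_gcp_ident_right[OF X' X A \<phi>']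
      X X' A B' g \<phi>'
    by (simp add: self_graded_simps(1-3) ident_hom tensor_ob)
qed

lemma is_graded_cat_self_graded: "is_graded_cat V (self_graded V)"
  unfolding is_graded_cat_def self_graded_simps
  apply (intro conjI ballI allI impI)
  subgoal by blast
  subgoal by blast
  subgoal by blast
  subgoal using tensor_ident comp_ident_right by simp
  subgoal by (rule self_graded_reix_comp)
  subgoal by (rule self_graded_reix_gcp)
  subgoal using self_graded_gcp_assoc_lhs self_graded_gcp_assoc_rhs by simp
  subgoal using triangle by simp
  subgoal by (rule self_graded_gid_left)
  done

end

section \<open>Transposing graded squares\<close>

lemma braided_monoidal_category: "is_braided V \<Longrightarrow> monoidal_category V"
  by unfold_locales (simp add: is_braided_def)

lemma brd_hom:
  "is_braided V \<Longrightarrow> X \<in> Ob V \<Longrightarrow> Y \<in> Ob V \<Longrightarrow> brd V X Y \<in> Hom V (tO V X Y) (tO V Y X)"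
  unfolding is_braided_def by (elim conjE) simp

lemma graded_gcp_hom:
  "is_graded_cat V C \<Longrightarrow> X \<in> Ob V \<Longrightarrow> Y \<in> Ob V \<Longrightarrow> A \<in> gOb C \<Longrightarrow> B \<in> gOb C \<Longrightarrow> D \<in> gOb C \<Longrightarrow>
   f \<in> gHom C X A B \<Longrightarrow> g \<in> gHom C Y B D \<Longrightarrow> gcp C Y X A B D g f \<in> gHom C (tO V Y X) A D"
  unfolding is_graded_cat_def by (elim conjE) simp

lemma graded_reix_ident:
  "is_graded_cat V C \<Longrightarrow> X \<in> Ob V \<Longrightarrow> A \<in> gOb C \<Longrightarrow> B \<in> gOb C \<Longrightarrow> f \<in> gHom C X A B \<Longrightarrow>
   reix C A B (ident V X) f = f"
  unfolding is_graded_cat_def by (elim conjE) simp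

lemma graded_reix_comp:
  "is_graded_cat V C \<Longrightarrow> X \<in> Ob V \<Longrightarrow> Y \<in> Ob V \<Longrightarrow> Z \<in> Ob V \<Longrightarrow> A \<in> gOb C \<Longrightarrow> B \<in> gOb C \<Longrightarrow>
   \<alpha> \<in> Hom V Y X \<Longrightarrow> \<beta> \<in> Hom V Z Y \<Longrightarrow> f \<in> gHom C X A B \<Longrightarrow>
   reix C A B (cp V \<alpha> \<beta>) f = reix C A B \<beta> (reix C A B \<alpha> f)"
  unfolding is_graded_cat_def by (elim conjE) simp

lemma graded_square_transpose:
  fixes V :: "('o,'m,'z) mcat_scheme" and C :: "('o,'m,'c,'d,'w) gcat_scheme"
  assumes braided: "is_braided V" and symmetric: "is_symmetric V" and graded: "is_graded_cat V C"
    and square: "is_graded_square V C X X' A A' B B' f g \<phi> \<phi>'"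
  shows "is_graded_square V C X' X A B A' B' \<phi> \<phi>' f g"
proof -
  interpret monoidal_category V using braided by (rule braided_monoidal_category)
  have obs: "X \<in> Ob V" "X' \<in> Ob V" "A \<in> gOb C" "A' \<in> gOb C" "B \<in> gOb C" "B' \<in> gOb C"
    and homs: "f \<in> gHom C X A A'" "g \<in> gHom C X B B'" "\<phi> \<in> gHom C X' A B" "\<phi>' \<in> gHom C X' A' B'"
    and commutes: "gcp C X X' A B B' g \<phi> = reix C A B' (brd V X X') (gcp C X' X A A' B' \<phi>' f)"
    using square unfolding is_graded_square_def by auto
  let ?h = "gcp C X' X A A' B' \<phi>' f"
  have XX': "tO V X' X \<in> Ob V" "tO V X X' \<in> Ob V" using obs by blast+
  have h: "?h \<in> gHom C (tO V X' X) A B'"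
    using graded_gcp_hom[OF graded] obs homs by blast
  have "reix C A B' (brd V X' X) (gcp C X X' A B B' g \<phi>)
      = reix C A B' (cp V (brd V X X') (brd V X' X)) ?h"
    using graded_reix_comp[OF graded XX'(1) XX'(2) XX'(1) obs(3,6)
        brd_hom[OF braided obs(1,2)] brd_hom[OF braided obs(2,1)] h] commutes
    by simp
  also have "\<dots> = ?h"
    using symmetric obs graded_reix_ident[OF graded XX'(1) obs(3,6) h]
    unfolding is_symmetric_def by simp
  finally show ?thesis using obs homs commutes unfolding is_graded_square_def by simp
qed


lemma symmetric_if_self_graded_squares_transpose:
  fixes V :: "('o,'m,'z) mcat_scheme"
  assumes braided: "is_braided V" and transpose: "squares_transpose V (self_graded V)"
  shows "is_symmetric V"
  unfolding is_symmetric_def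
proof (intro ballI)
  fix X' X assume X': "X' \<in> Ob V" and X: "X \<in> Ob V"
  interpret monoidal_category V using braided by (rule braided_monoidal_category)
  let ?I = "unitO V"
  let ?a = "asc V X X' ?I" and ?a' = "asc V X' X ?I"
  let ?c = "brd V X X'" and ?c' = "brd V X' X"
  have I: "?I \<in> Ob V" by blast
  have a: "?a \<in> Hom V (tO V (tO V X X') ?I) (tO V X (tO V X' ?I))" using X X' by blast
  have a': "?a' \<in> Hom V (tO V (tO V X' X) ?I) (tO V X' (tO V X ?I))" using X X' by blast
  have c: "?c \<in> Hom V (tO V X X') (tO V X' X)" and c': "?c' \<in> Hom V (tO V X' X) (tO V X X')"
    using brd_hom[OF braided] X X' by blast+
  have cI: "tM V ?c (ident V ?I) \<in> Hom V (tO V (tO V X X') ?I) (tO V (tO V X' X) ?I)"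
    and c'I: "tM V ?c' (ident V ?I) \<in> Hom V (tO V (tO V X' X) ?I) (tO V (tO V X X') ?I)"
    using c c' by blast+
  have id: "ident V (tO V X' (tO V X ?I)) \<in> Hom V (tO V X' (tO V X ?I)) (tO V X' (tO V X ?I))"
    using X X' by blast
  \<comment> \<open>The side \<open>g\<close> making the square with the other three sides identities commute.\<close>
  obtain g where g: "g \<in> Hom V (tO V X (tO V X' ?I)) (tO V X' (tO V X ?I))"
    and g_a: "cp V g ?a = cp V ?a' (tM V ?c (ident V ?I))"
    using factor_through_iso[OF asc_iso[OF X X' I] a comp_hom[OF cI a']] by blast
  from g_a have "is_graded_square V (self_graded V) X X' ?I (tO V X ?I) (tO V X' ?I) (tO V X' (tO V X ?I))
      (ident V (tO V X ?I)) g (ident V (tO V X' ?I)) (ident V (tO V X' (tO V X ?I)))"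
    using self_graded_square_ident_sides_iff[OF X X' I g id] comp_ident_left[OF a'] by simp
  then have "is_graded_square V (self_graded V) X' X ?I (tO V X' ?I) (tO V X ?I) (tO V X' (tO V X ?I))
      (ident V (tO V X' ?I)) (ident V (tO V X' (tO V X ?I))) (ident V (tO V X ?I)) g"
    by (rule transpose[unfolded squares_transpose_def, rule_format])
  then have "?a' = cp V (cp V g ?a) (tM V ?c' (ident V ?I))"
    using self_graded_square_ident_sides_iff[OF X' X I id g] comp_ident_left[OF a'] by simp
  also have "\<dots> = cp V ?a' (tM V (cp V ?c ?c') (ident V ?I))"
    using g_a comp_assoc[OF c'I cI a'] tensor_comp_ident[OF c' c I] by simp
  finally have "cp V ?a' (ident V (tO V (tO V X' X) ?I)) = cp V ?a' (tM V (cp V ?c ?c') (ident V ?I))"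
    using comp_ident_right[OF a'] by simp
  then have "ident V (tO V (tO V X' X) ?I) = tM V (cp V ?c ?c') (ident V ?I)"
    by (rule iso_cancel_left[OF asc_iso[OF X' X I] a' ident_hom[OF tensor_ob[OF tensor_ob[OF X' X] I]]
          tensor_hom[OF comp_hom[OF c' c] ident_hom[OF I]]])
  then show "cp V ?c ?c' = ident V (tO V X' X)"
    using ident_if_tensor_unit_ident[OF comp_hom[OF c' c]] by simp
qed

theorem proposition13p5:
  fixes V :: "('o,'m) mcat"
  assumes "is_braided V"
  shows "(is_symmetric V \<longrightarrow>
            (\<forall>C :: ('o,'m,'c,'d) gcat. is_graded_cat V C \<longrightarrow> squares_transpose V C))
       \<and> ((\<forall>C :: ('o,'m,'o,'m) gcat. is_graded_cat V C \<longrightarrow> squares_transpose V C)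
            \<longrightarrow> is_symmetric V)"
proof (intro conjI impI allI)
  fix C :: "('o,'m,'c,'d) gcat"
  assume "is_symmetric V" and "is_graded_cat V C"
  then show "squares_transpose V C"
    unfolding squares_transpose_def
    by (intro allI impI) (rule graded_square_transpose[OF assms])
next
  assume "\<forall>C :: ('o,'m,'o,'m) gcat. is_graded_cat V C \<longrightarrow> squares_transpose V C"
  then show "is_symmetric V"
    using symmetric_if_self_graded_squares_transpose[OF assms]
      monoidal_category.is_graded_cat_self_graded[OF braided_monoidal_category[OF assms]]
    by blast
qed

end
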